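(* Let $s\in(0,1)$ and let $E\subset\mathbb{R}^n$ be a set of locally finite $s$-perimeter. Then \[ \partial^-E=\{x\in\mathbb{R}^n: P_s^L(E,B_r(x))>0 \text{ for every } r>0\}. \]
   Context: $\mathcal L_s(A,B):=\int_A\int_B|x-y|^{-n-s}dx\,dy$; $P_s^L(E,\Omega):=\mathcal L_s(E\cap\Omega,E^c\cap\Omega)$; $P_s(E,\Omega):=P_s^L(E,\Omega)+\mathcal L_s(E\cap\Omega,E^c\setminus\Omega)+\mathcal L_s(E\setminus\Omega,E^c\cap\Omega)$. $E$ has locally finite $s$-perimeter if $P_s(E,\Omega)<\infty$ for every bounded open $\Omega$. The measure theoretic boundary is $\partial^-E:=\{x: 0<|E\cap B_r(x)|<\omega_nr^n\ \forall r>0\}$, where $\omega_n=|B_1|$. *)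

theory Defs
  imports "HOL-Analysis.Analysis"
begin

definition Ls :: "real \<Rightarrow> 'a::euclidean_space set \<Rightarrow> 'a set \<Rightarrow> ennreal" where
  "Ls s A B = (\<integral>\<^sup>+ x. (\<integral>\<^sup>+ y. indicator A x * indicator B y *
      ennreal (norm (x - y) powr (- (real DIM('a) + s))) \<partial>lebesgue) \<partial>lebesgue)"

definition PsL :: "real \<Rightarrow> 'a::euclidean_space set \<Rightarrow> 'a set \<Rightarrow> ennreal" where
  "PsL s E \<Omega> = Ls s (E \<inter> \<Omega>) (- E \<inter> \<Omega>)"

definition Ps :: "real \<Rightarrow> 'a::euclidean_space set \<Rightarrow> 'a set \<Rightarrow> ennreal" where
  "Ps s E \<Omega> = PsL s E \<Omega> + Ls s (E \<inter> \<Omega>) (- E - \<Omega>) + Ls s (E - \<Omega>) (- E \<inter> \<Omega>)"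

definition locally_finite_sper :: "real \<Rightarrow> 'a::euclidean_space set \<Rightarrow> bool" where
  "locally_finite_sper s E \<longleftrightarrow> (\<forall>\<Omega>. open \<Omega> \<and> bounded \<Omega> \<longrightarrow> Ps s E \<Omega> < \<infinity>)"

definition omega_n :: "'a::euclidean_space itself \<Rightarrow> real" where
  "omega_n _ = measure lebesgue (ball (0::'a) 1)"

definition meas_boundary :: "'a::euclidean_space set \<Rightarrow> 'a set" where
  "meas_boundary E = {x. \<forall>r>0. 0 < emeasure lebesgue (E \<inter> ball x r) \<and>
      emeasure lebesgue (E \<inter> ball x r) < ennreal (omega_n TYPE('a) * r ^ DIM('a))}"

end

theory Submission
  imports Defs
begin

text \<open>Both sides say the same thing about each ball \<open>B\<^sub>r(x)\<close>: \<open>E\<close> and its complement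
  both meet it in a set of positive measure. For \<open>\<partial>\<^sup>-E\<close> this is because
  \<open>|E \<inter> B\<^sub>r(x)| + |E\<^sup>c \<inter> B\<^sub>r(x)| = \<omega>\<^sub>n r\<^sup>n < \<infinity>\<close>. For \<open>P\<^sub>s\<^sup>L(E, B\<^sub>r(x)) = L\<^sub>s(A, B)\<close> it is
  because the kernel is positive: \<open>L\<^sub>s(A, B)\<close> vanishes when \<open>A\<close> or \<open>B\<close> is null, and
  otherwise bounded pieces \<open>A', B' \<subseteq> B\<^sub>R(0)\<close> of positive measure give
  \<open>L\<^sub>s(A, B) \<ge> (2R)\<^sup>-\<^sup>n\<^sup>-\<^sup>s |A'| |B'| > 0\<close>.\<close>

lemma emeasure_Int_ball_pos:
  fixes A :: "'a::euclidean_space set"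
  assumes A: "A \<in> sets lebesgue" and pos: "0 < emeasure lebesgue A"
  obtains R where "0 < R" and "0 < emeasure lebesgue (A \<inter> ball 0 R)"
proof -
  let ?A = "\<lambda>n::nat. A \<inter> ball 0 (real n)"
  have "range ?A \<subseteq> sets lebesgue"
    using A by auto
  moreover have "incseq ?A"
    by (auto simp: incseq_def)
  moreover have "(\<Union>n. ?A n) = A"
  proof (intro equalityI subsetI)
    fix x assume "x \<in> A"
    moreover obtain n :: nat where "norm x < real n" using reals_Archimedean2 by blast
    ultimately show "x \<in> (\<Union>n. ?A n)" by auto
  qed blast
  ultimately have "0 < (SUP n. emeasure lebesgue (?A n))"
    using pos SUP_emeasure_incseq[of ?A lebesgue] by metis
  then obtain n where n: "0 < emeasure lebesgue (?A n)"
    unfolding less_SUP_iff by blast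
  hence "n \<noteq> 0" by (intro notI) simp
  with n show thesis by (intro that[of "real n"]) auto
qed

lemma Ls_null_left:
  fixes A B :: "'a::euclidean_space set"
  assumes "A \<in> null_sets lebesgue"
  shows "Ls s A B = 0"
proof -
  have "AE x in lebesgue. x \<notin> A" using assms by (rule AE_not_in)
  hence "Ls s A B = (\<integral>\<^sup>+ x. 0 \<partial>(lebesgue :: 'a measure))" unfolding Ls_def
    by (rule nn_integral_cong_AE[OF eventually_mono]) simp
  thus ?thesis by simp
qed

lemma Ls_null_right:
  fixes A B :: "'a::euclidean_space set"
  assumes "B \<in> null_sets lebesgue"
  shows "Ls s A B = 0"
proof -
  have "AE y in lebesgue. y \<notin> B" using assms by (rule AE_not_in)
  hence "(\<integral>\<^sup>+ y. indicator A x * indicator B y *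
      ennreal (norm (x - y) powr (- (real DIM('a) + s))) \<partial>lebesgue) = (\<integral>\<^sup>+ y. 0 \<partial>(lebesgue :: 'a measure))"
    for x by (rule nn_integral_cong_AE[OF eventually_mono]) simp
  thus ?thesis unfolding Ls_def by simp
qed

lemma Ls_mono:
  assumes "A' \<subseteq> A" "B' \<subseteq> B"
  shows "Ls s A' B' \<le> Ls s A B"
  unfolding Ls_def using assms
  by (intro nn_integral_mono mult_right_mono) (auto simp: indicator_def)

text \<open>The diagonal \<open>x = y\<close> must be discarded: there the kernel is \<open>0 powr _ = 0\<close>.\<close>

lemma Ls_ge_emeasure_mult:
  fixes A B :: "'a::euclidean_space set"
  assumes A: "A \<in> sets lebesgue" and B: "B \<in> sets lebesgue"
    and A_ball: "A \<subseteq> ball 0 R" and B_ball: "B \<subseteq> ball 0 R"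
    and s: "- real DIM('a) \<le> s"
  shows "ennreal ((2 * R) powr (- (real DIM('a) + s))) * emeasure lebesgue A * emeasure lebesgue B
    \<le> Ls s A B"
proof -
  define c where "c = (2 * R) powr (- (real DIM('a) + s))"
  have kernel_ge: "c \<le> norm (x - y) powr (- (real DIM('a) + s))"
    if "x \<in> A" "y \<in> B" "x \<noteq> y" for x y
  proof -
    have "norm (x - y) \<le> norm x + norm y" by (rule norm_triangle_ineq4)
    also have "\<dots> \<le> 2 * R" using that A_ball B_ball by fastforce
    finally show ?thesis
      unfolding c_def using that s by (intro powr_mono2') auto
  qed
  have inner: "ennreal c * emeasure lebesgue B * indicator A x \<le>
      (\<integral>\<^sup>+ y. indicator A x * indicator B y *
        ennreal (norm (x - y) powr (- (real DIM('a) + s))) \<partial>lebesgue)" for x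
  proof -
    have "{x} \<in> null_sets lebesgue"
      by (simp add: countable_imp_null_set_lborel null_sets_completionI)
    hence "ennreal c * emeasure lebesgue B * indicator A x
        = ennreal c * indicator A x * emeasure lebesgue (B - {x})"
      using B by (simp add: emeasure_Diff_null_set mult_ac)
    also have "\<dots> = (\<integral>\<^sup>+ y. ennreal c * indicator A x * indicator (B - {x}) y \<partial>lebesgue)"
      using B by (subst nn_integral_cmult_indicator) auto
    also have "\<dots> \<le> (\<integral>\<^sup>+ y. indicator A x * indicator B y *
        ennreal (norm (x - y) powr (- (real DIM('a) + s))) \<partial>lebesgue)"
      using kernel_ge by (intro nn_integral_mono) (auto simp: indicator_def)
    finally show ?thesis .
  qed
  have "ennreal c * emeasure lebesgue A * emeasure lebesgue B
      = (\<integral>\<^sup>+ x. ennreal c * emeasure lebesgue B * indicator A x \<partial>lebesgue)"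
    using A by (subst nn_integral_cmult_indicator) (simp_all add: mult_ac)
  also have "\<dots> \<le> Ls s A B"
    unfolding Ls_def by (intro nn_integral_mono inner)
  finally show ?thesis unfolding c_def .
qed

lemma Ls_pos_iff:
  fixes A B :: "'a::euclidean_space set"
  assumes A: "A \<in> sets lebesgue" and B: "B \<in> sets lebesgue" and s: "- real DIM('a) \<le> s"
  shows "0 < Ls s A B \<longleftrightarrow> 0 < emeasure lebesgue A \<and> 0 < emeasure lebesgue B"
proof
  assume "0 < Ls s A B"
  show "0 < emeasure lebesgue A \<and> 0 < emeasure lebesgue B"
  proof (rule ccontr)
    assume "\<not> ?thesis"
    hence "A \<in> null_sets lebesgue \<or> B \<in> null_sets lebesgue"
      using A B by (auto simp: null_sets_def)
    hence "Ls s A B = 0"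
      using Ls_null_left Ls_null_right by blast
    with \<open>0 < Ls s A B\<close> show False by simp
  qed
next
  assume pos: "0 < emeasure lebesgue A \<and> 0 < emeasure lebesgue B"
  obtain R\<^sub>A where "0 < R\<^sub>A" and pos_A: "0 < emeasure lebesgue (A \<inter> ball 0 R\<^sub>A)"
    using emeasure_Int_ball_pos[OF A] pos by blast
  obtain R\<^sub>B where pos_B: "0 < emeasure lebesgue (B \<inter> ball 0 R\<^sub>B)"
    using emeasure_Int_ball_pos[OF B] pos by blast
  define R where "R = max R\<^sub>A R\<^sub>B"
  have "emeasure lebesgue (A \<inter> ball 0 R\<^sub>A) \<le> emeasure lebesgue (A \<inter> ball 0 R)"
    using A by (intro emeasure_mono) (auto simp: R_def)
  with pos_A have A_R: "0 < emeasure lebesgue (A \<inter> ball 0 R)"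
    by (rule order.strict_trans2)
  have "emeasure lebesgue (B \<inter> ball 0 R\<^sub>B) \<le> emeasure lebesgue (B \<inter> ball 0 R)"
    using B by (intro emeasure_mono) (auto simp: R_def)
  with pos_B have B_R: "0 < emeasure lebesgue (B \<inter> ball 0 R)"
    by (rule order.strict_trans2)
  have "0 < (2 * R) powr (- (real DIM('a) + s))"
    using \<open>0 < R\<^sub>A\<close> by (simp add: R_def)
  with A_R B_R have "0 < ennreal ((2 * R) powr (- (real DIM('a) + s)))
      * emeasure lebesgue (A \<inter> ball 0 R) * emeasure lebesgue (B \<inter> ball 0 R)"
    by (simp add: ennreal_zero_less_mult_iff)
  also have "\<dots> \<le> Ls s (A \<inter> ball 0 R) (B \<inter> ball 0 R)"
    using A B s by (intro Ls_ge_emeasure_mult) auto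
  also have "\<dots> \<le> Ls s A B"
    by (intro Ls_mono) auto
  finally show "0 < Ls s A B" .
qed

lemma emeasure_ball_omega_n:
  fixes x :: "'a::euclidean_space"
  assumes "0 \<le> r"
  shows "emeasure lebesgue (ball x r) = ennreal (omega_n TYPE('a) * r ^ DIM('a))"
proof -
  have "emeasure lebesgue (ball (0::'a) 1) = ennreal (omega_n TYPE('a))"
    unfolding omega_n_def
    using emeasure_lborel_ball_finite[of "0::'a" 1] by (simp add: emeasure_eq_ennreal_measure)
  thus ?thesis
    using emeasure_lebesgue_ball_conv_unit_ball[OF assms, of x] assms
    by (simp add: omega_n_def ennreal_mult mult.commute)
qed

lemma emeasure_Int_less_iff_Diff_pos:
  assumes "E \<in> sets M" "\<Omega> \<in> sets M" "emeasure M \<Omega> \<noteq> \<infinity>"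
  shows "emeasure M (E \<inter> \<Omega>) < emeasure M \<Omega> \<longleftrightarrow> 0 < emeasure M (\<Omega> - E)"
proof -
  have "emeasure M \<Omega> = emeasure M (E \<inter> \<Omega>) + emeasure M (\<Omega> - E)"
    using assms by (subst plus_emeasure) (auto intro: arg_cong[where f = "emeasure M"])
  moreover have "emeasure M (E \<inter> \<Omega>) \<noteq> \<infinity>"
    using assms by (metis emeasure_mono inf_le2 infinity_ennreal_def neq_top_trans)
  ultimately show ?thesis
    using ennreal_add_left_cancel_less[of "emeasure M (E \<inter> \<Omega>)" 0] by simp
qed

theorem lemma3p1:
  fixes s :: real and E :: "'a::euclidean_space set"
  assumes "0 < s" and "s < 1"
    and "E \<in> sets lebesgue"
    and "locally_finite_sper s E"
  shows "meas_boundary E = {x. \<forall>r>0. PsL s E (ball x r) > 0}"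
proof -
  have "0 < emeasure lebesgue (E \<inter> ball x r) \<and>
      emeasure lebesgue (E \<inter> ball x r) < ennreal (omega_n TYPE('a) * r ^ DIM('a))
      \<longleftrightarrow> 0 < PsL s E (ball x r)" if "0 < r" for x r
  proof -
    have "emeasure lebesgue (ball x r) \<noteq> \<infinity>"
      using emeasure_lborel_ball_finite[of x r] by simp
    hence less_iff: "emeasure lebesgue (E \<inter> ball x r) < ennreal (omega_n TYPE('a) * r ^ DIM('a))
        \<longleftrightarrow> 0 < emeasure lebesgue (ball x r - E)"
      using emeasure_Int_less_iff_Diff_pos[OF \<open>E \<in> sets lebesgue\<close>, of "ball x r"]
        emeasure_ball_omega_n[of r x] \<open>0 < r\<close>
      by simp
    have "ball x r - E = - E \<inter> ball x r" by blast
    moreover have "ball x r - E \<in> sets lebesgue" using \<open>E \<in> sets lebesgue\<close> by auto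
    ultimately have "0 < PsL s E (ball x r) \<longleftrightarrow>
        0 < emeasure lebesgue (E \<inter> ball x r) \<and> 0 < emeasure lebesgue (- E \<inter> ball x r)"
      unfolding PsL_def using \<open>E \<in> sets lebesgue\<close> \<open>0 < s\<close>
      by (intro Ls_pos_iff) auto
    with less_iff \<open>ball x r - E = - E \<inter> ball x r\<close> show ?thesis by simp
  qed
  thus ?thesis unfolding meas_boundary_def by blast
qed

end
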